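(* Let $d\ge1$, $N=2^d$, $Q\ge 1$, and let $\Omega=\{(x,y,m):0\le x\le 1,\ 0<m\le y\le Qm\}$. Let $B:\Omega\to\mathbb{R}$ satisfy \[ B(x,y,m)\ge \frac1N\sum_{i=1}^N B(x_i,y_i,m_i) \] whenever $(x,y,m)\in\Omega$, $(x_i,y_i,m_i)\in\Omega$ for $i=1,\dots,N$, $\frac1N\sum x_i=x$, $\frac1N\sum y_i=y$ and $\min_i m_i=m$. Then $B$ is decreasing in $m$: if $(x,y,m_1),(x,y,m_2)\in\Omega$ with $m_1\le m_2$, then $B(x,y,m_1)\ge B(x,y,m_2)$. *)

theory Defs
  imports Main "HOL-Analysis.Analysis"
begin

definition Omega :: "real \<Rightarrow> (real \<times> real \<times> real) set" where
  "Omega Q = {(x, y, m). 0 \<le> x \<and> x \<le> 1 \<and> 0 < m \<and> m \<le> y \<and> y \<le> Q * m}"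

end

theory Submission
  imports Defs
begin

text \<open>Test the concavity condition with one point at level m1 and the remaining N - 1 points
  at level m2, all at the same (x, y): then B(x, y, m1) \<ge> (B(x, y, m1) + (N - 1) B(x, y, m2)) / N,
  which rearranges to B(x, y, m1) \<ge> B(x, y, m2) as soon as N \<ge> 2.\<close>

lemma sum_lessThan_split_first:
  fixes f :: "'b \<Rightarrow> 'a :: comm_ring_1"
  assumes "N \<ge> 1"
  shows "(\<Sum>i<N. f (if i = 0 then a else b)) = f a + of_nat (N - 1) * f b"
proof -
  have "{..<N} = insert 0 {1..<N}" using assms by auto
  then have "(\<Sum>i<N. f (if i = 0 then a else b)) = f a + (\<Sum>i\<in>{1..<N}. f b)"
    by (simp add: sum.atLeast_Suc_lessThan_Suc_shift)
  then show ?thesis by simp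
qed

lemma ge_of_ge_average_with_copies:
  fixes u v :: real
  assumes "N \<ge> 2" and "u \<ge> (u + real (N - 1) * v) / N"
  shows "u \<ge> v"
proof -
  have "real N * u \<ge> u + (real N - 1) * v"
    using assms by (simp add: of_nat_diff field_simps)
  then have "(real N - 1) * u \<ge> (real N - 1) * v" by (simp add: algebra_simps)
  moreover have "real N - 1 > 0" using assms(1) by simp
  ultimately show ?thesis by simp
qed

lemma antimono_in_min_of_average_concave:
  fixes N :: nat and \<Omega> :: "(real \<times> real \<times> real) set" and B :: "real \<Rightarrow> real \<Rightarrow> real \<Rightarrow> real"
  assumes N: "N \<ge> 2"
    and concav: "\<And>x y m (xs :: nat \<Rightarrow> real) ys ms.
        (x, y, m) \<in> \<Omega> \<Longrightarrow>
        (\<forall>i<N. (xs i, ys i, ms i) \<in> \<Omega>) \<Longrightarrow>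
        (\<Sum>i<N. xs i) / N = x \<Longrightarrow>
        (\<Sum>i<N. ys i) / N = y \<Longrightarrow>
        Min (ms ` {..<N}) = m \<Longrightarrow>
        B x y m \<ge> (\<Sum>i<N. B (xs i) (ys i) (ms i)) / N"
    and p1: "(x, y, m1) \<in> \<Omega>"
    and p2: "(x, y, m2) \<in> \<Omega>"
    and le: "m1 \<le> m2"
  shows "B x y m1 \<ge> B x y m2"
proof -
  define ms where "ms = (\<lambda>i::nat. if i = 0 then m1 else m2)"
  have "ms ` {..<N} = {m1, m2}"
    using N by (auto simp: ms_def image_iff) (metis One_nat_def Suc_1 Suc_le_lessD zero_neq_one)
  then have "Min (ms ` {..<N}) = m1" using le by (simp add: min_def)
  moreover have "\<forall>i<N. (x, y, ms i) \<in> \<Omega>" using p1 p2 by (simp add: ms_def)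
  moreover have "(\<Sum>i<N. x) / N = x" "(\<Sum>i<N. y) / N = y" using N by simp_all
  ultimately have "B x y m1 \<ge> (\<Sum>i<N. B x y (ms i)) / N"
    using concav[OF p1, of "\<lambda>_. x" "\<lambda>_. y" ms] by simp
  also have "(\<Sum>i<N. B x y (ms i)) = B x y m1 + real (N - 1) * B x y m2"
    unfolding ms_def using N by (intro sum_lessThan_split_first) simp
  finally show ?thesis by (rule ge_of_ge_average_with_copies[OF N])
qed

theorem mainTheorem4:
  fixes d :: nat and Q :: real and B :: "real \<Rightarrow> real \<Rightarrow> real \<Rightarrow> real"
  assumes d: "d \<ge> 1"
    and Q: "Q \<ge> 1"
    and concav: "\<And>x y m (xs :: nat \<Rightarrow> real) ys ms.
        (x, y, m) \<in> Omega Q \<Longrightarrow>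
        (\<forall>i<2^d. (xs i, ys i, ms i) \<in> Omega Q) \<Longrightarrow>
        (\<Sum>i<2^d. xs i) / 2^d = x \<Longrightarrow>
        (\<Sum>i<2^d. ys i) / 2^d = y \<Longrightarrow>
        Min (ms ` {..<2^d}) = m \<Longrightarrow>
        B x y m \<ge> (\<Sum>i<2^d. B (xs i) (ys i) (ms i)) / 2^d"
    and p1: "(x, y, m1) \<in> Omega Q"
    and p2: "(x, y, m2) \<in> Omega Q"
    and le: "m1 \<le> m2"
  shows "B x y m1 \<ge> B x y m2"
proof (rule antimono_in_min_of_average_concave[OF _ _ p1 p2 le])
  show "(2::nat) ^ d \<ge> 2"
    using d by (metis one_le_numeral power_increasing power_one_right)
  show "B x y m \<ge> (\<Sum>i<2 ^ d. B (xs i) (ys i) (ms i)) / real (2 ^ d)"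
    if "(x, y, m) \<in> Omega Q" "\<forall>i<2 ^ d. (xs i, ys i, ms i) \<in> Omega Q"
      "(\<Sum>i<2 ^ d. xs i) / real (2 ^ d) = x" "(\<Sum>i<2 ^ d. ys i) / real (2 ^ d) = y"
      "Min (ms ` {..<2 ^ d}) = m"
    for x y m and xs ys ms :: "nat \<Rightarrow> real"
    using concav that by simp
qed

end
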